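(* Let $E$ be a $k$-dimensional subspace of $\mathbb{C}^n$ with $k>1$, and let $W$ be a nonzero subspace of $E$. Then $W$ is special in $E$ if and only if $W=E\cap X$ for some polydiagonal $X$ of codimension $\nu=\dim E-\dim W$ in $\mathbb{C}^n$.
   Context: A polydiagonal is a subspace of $\mathbb{C}^n$ of the form $\{x\in\mathbb{C}^n : x_i=x_j \text{ for all } (i,j)\in R\}$ for some (possibly empty) set $R$ of pairs of indices in $\{1,\dots,n\}$. For a subspace $W\subseteq\mathbb{C}^n$, $P(W)$ denotes the smallest polydiagonal containing $W$. Given a subspace $E$ of $\mathbb{C}^n$, a subspace $W$ of $E$ is called special in $E$ if for every subspace $U$ of $E$ with $\dim U=\dim W$ and $P(U)\subseteq P(W)$ one has $P(U)=P(W)$. *)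

theory Defs
  imports "HOL-Analysis.Analysis"
begin

text \<open>Vectors of C^n are modelled as complex ^ 'n (n = CARD('n)); complex subspaces,
  spans and dimensions are those of the complex vector space structure vec
  (scalar multiplication (*s)).\<close>

definition polydiagonal_of :: "('n \<times> 'n) set \<Rightarrow> (complex ^ 'n) set" where
  "polydiagonal_of R = {x. \<forall>(i, j) \<in> R. x $ i = x $ j}"

definition polydiagonal :: "(complex ^ 'n) set \<Rightarrow> bool" where
  "polydiagonal X \<longleftrightarrow> (\<exists>R. X = polydiagonal_of R)"

definition poly_hull :: "(complex ^ 'n) set \<Rightarrow> (complex ^ 'n) set" where
  "poly_hull W = \<Inter> {X. polydiagonal X \<and> W \<subseteq> X}"

text \<open>W special in E (W is assumed to be a subspace of E separately).\<close>
definition special :: "(complex ^ 'n) set \<Rightarrow> (complex ^ 'n) set \<Rightarrow> bool" where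
  "special E W \<longleftrightarrow>
     (\<forall>U. vec.subspace U \<and> U \<subseteq> E \<and> vec.dim U = vec.dim W \<and> poly_hull U \<subseteq> poly_hull W
          \<longrightarrow> poly_hull U = poly_hull W)"

end

theory Submission
  imports Defs
begin

text \<open>
  Proof idea.  A polydiagonal is the solution set of coordinate equalities x_i = x_j, and the
  smallest polydiagonal P(W) containing W is cut out by all equalities that hold on W.

  (<==) If W = E \<inter> X with X polydiagonal, then any U \<subseteq> E with P(U) \<subseteq> P(W) \<subseteq> X lies in
  E \<inter> X = W; equal dimension forces U = W, so W is special.

  (==>) For special W we show E \<inter> P(W) = W.  If W \<subset> E \<inter> P(W) and some equality x_i = x_j
  fails on W, the hyperplane x_i = x_j cuts E \<inter> P(W) in a subspace of dimension \<ge> dim W;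
  a subspace U of it of dimension dim W has P(U) \<subseteq> P(W) but violates special-ness, since
  P(U) misses a vector of W.  If all equalities hold on W, then W is a nonzero space of
  constant vectors and P(W) \<subseteq> W.  Finally, every section E \<inter> X by a polydiagonal can be
  rewritten as E \<inter> X' with codim X' = codim (E \<inter> X' in E): impose the defining equalities one
  at a time and drop those that do not cut down E \<inter> X' -- every kept equality lowers both
  dimensions by exactly one.
\<close>

section \<open>Subspaces cut out by coordinate equalities\<close>

lemma coord_eq_subspace: "vec.subspace {x :: 'a::field ^ 'n. x $ i = x $ j}"
  unfolding vec.subspace_def by auto

lemma dim_inter_coord_eq:
  fixes S :: "('a::field ^ 'n) set"
  assumes S: "vec.subspace S" and s: "s \<in> S" "s $ i \<noteq> s $ j"
  shows "vec.dim (S \<inter> {x. x $ i = x $ j}) + 1 = vec.dim S"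
proof -
  define K where "K = S \<inter> {x. x $ i = x $ j}"
  have K: "vec.subspace K"
    unfolding K_def by (rule vec.subspace_inter[OF S coord_eq_subspace])
  have "s \<notin> vec.span K"
    using s K by (simp add: K_def vec.span_eq_iff[THEN iffD2])
  hence dim_insert: "vec.dim (insert s K) = vec.dim K + 1"
    by (simp add: vec.dim_insert)
  have "insert s K \<subseteq> S" using s unfolding K_def by auto
  hence upper: "vec.dim (insert s K) \<le> vec.dim S" by (rule vec.dim_subset)
  have "S \<subseteq> vec.span (insert s K)"
  proof
    fix x assume x: "x \<in> S"
    define c where "c = (x $ i - x $ j) / (s $ i - s $ j)"
    have "x - c *s s \<in> K"
      using x s S by (auto simp: K_def c_def field_simps vec.subspace_diff vec.subspace_scale)
    hence "(x - c *s s) + c *s s \<in> vec.span (insert s K)"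
      by (intro vec.span_add vec.span_scale) (auto intro: vec.span_base)
    thus "x \<in> vec.span (insert s K)" by simp
  qed
  hence "vec.dim S \<le> vec.dim (insert s K)"
    using vec.dim_subset vec.dim_span by metis
  with dim_insert upper show ?thesis unfolding K_def by simp
qed

lemma (in vector_space) subspace_of_smaller_dim:
  assumes "subspace S" "m \<le> dim S"
  obtains U where "subspace U" "U \<subseteq> S" "dim U = m"
proof -
  obtain B where B: "B \<subseteq> S" "independent B" "S \<subseteq> span B" "card B = dim S"
    by (rule basis_exists)
  obtain B' where B': "B' \<subseteq> B" "card B' = m"
    using obtain_subset_with_card_n assms(2) B(4) by metis
  have "independent B'" using B(2) B'(1) independent_mono by blast
  hence "dim (span B') = m" using B' by (simp add: dim_eq_card_independent)
  moreover have "span B' \<subseteq> S"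
    using B'(1) B(1) assms(1) by (meson order_trans span_minimal)
  ultimately show thesis using that subspace_span by blast
qed

section \<open>Polydiagonals and the polydiagonal hull\<close>

lemma polydiagonal_of_subspace: "vec.subspace (polydiagonal_of R)"
  unfolding vec.subspace_def polydiagonal_of_def by (force simp: split_beta)

lemma polydiagonal_of_insert:
  "polydiagonal_of (insert (i, j) R) = polydiagonal_of R \<inter> {x. x $ i = x $ j}"
  unfolding polydiagonal_of_def by auto

lemma polydiagonal_subspace: "polydiagonal X \<Longrightarrow> vec.subspace X"
  unfolding polydiagonal_def using polydiagonal_of_subspace by blast

definition equal_coords :: "(complex ^ 'n) set \<Rightarrow> ('n \<times> 'n) set" where
  "equal_coords W = {(i, j). \<forall>x\<in>W. x $ i = x $ j}"

lemma poly_hull_upper: "W \<subseteq> poly_hull W"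
  unfolding poly_hull_def by blast

lemma poly_hull_least: "polydiagonal X \<Longrightarrow> W \<subseteq> X \<Longrightarrow> poly_hull W \<subseteq> X"
  unfolding poly_hull_def by blast

lemma poly_hull_eq: "poly_hull W = polydiagonal_of (equal_coords W)"
proof
  show "poly_hull W \<subseteq> polydiagonal_of (equal_coords W)"
  proof (rule poly_hull_least)
    show "polydiagonal (polydiagonal_of (equal_coords W))"
      unfolding polydiagonal_def by blast
    show "W \<subseteq> polydiagonal_of (equal_coords W)"
      by (auto simp: polydiagonal_of_def equal_coords_def)
  qed
next
  show "polydiagonal_of (equal_coords W) \<subseteq> poly_hull W"
  proof (unfold poly_hull_def, intro subsetI InterI)
    fix t X
    assume t: "t \<in> polydiagonal_of (equal_coords W)" and "X \<in> {X. polydiagonal X \<and> W \<subseteq> X}"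
    then obtain R where X: "X = polydiagonal_of R" "W \<subseteq> X"
      unfolding polydiagonal_def by blast
    have "R \<subseteq> equal_coords W"
      using X unfolding equal_coords_def polydiagonal_of_def by auto
    thus "t \<in> X"
      using t unfolding X polydiagonal_of_def by auto
  qed
qed

lemma polydiagonal_poly_hull: "polydiagonal (poly_hull W)"
  unfolding poly_hull_eq polydiagonal_def by blast

lemma special_if_section:
  assumes W: "vec.subspace W" and X: "polydiagonal X" and WX: "W = E \<inter> X"
  shows "special E W"
  unfolding special_def
proof (intro allI impI)
  fix U
  assume U: "vec.subspace U \<and> U \<subseteq> E \<and> vec.dim U = vec.dim W \<and> poly_hull U \<subseteq> poly_hull W"
  have "poly_hull W \<subseteq> X" using X WX by (intro poly_hull_least) auto
  hence "U \<subseteq> W" using U WX poly_hull_upper[of U] by blast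
  hence "U = W" using vec.subspace_dim_equal[of U W] U W by simp
  thus "poly_hull U = poly_hull W" by simp
qed

text \<open>If some coordinate equality fails on W, then W is not special in any E with
  W \<subset> E \<inter> P(W): the hyperplane of that equality still leaves room for a competitor U.\<close>
lemma not_special_if_nonconstant:
  fixes E W :: "(complex ^ 'n) set"
  assumes E: "vec.subspace E" and W: "vec.subspace W"
    and psub: "W \<subset> E \<inter> poly_hull W"
    and w: "w \<in> W" "w $ i \<noteq> w $ j"
  shows "\<not> special E W"
proof
  assume sp: "special E W"
  define Y where "Y = poly_hull W"
  define H where "H = {x :: complex ^ 'n. x $ i = x $ j}"
  have Z: "vec.subspace (E \<inter> Y)"
    unfolding Y_def using E polydiagonal_subspace[OF polydiagonal_poly_hull]
    by (rule vec.subspace_inter)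
  have spans: "vec.span W = W" "vec.span (E \<inter> Y) = E \<inter> Y"
    using W Z by (simp_all add: vec.span_eq_iff)
  have "vec.dim W < vec.dim (E \<inter> Y)"
    by (rule vec.dim_psubset) (use psub[folded Y_def] in \<open>simp only: spans\<close>)
  moreover have "vec.dim (E \<inter> Y \<inter> H) + 1 = vec.dim (E \<inter> Y)"
    unfolding H_def using w psub poly_hull_upper[of W]
    by (intro dim_inter_coord_eq[OF Z]) (auto simp: Y_def)
  ultimately have room: "vec.dim W \<le> vec.dim (E \<inter> Y \<inter> H)" by linarith
  have "vec.subspace (E \<inter> Y \<inter> H)"
    unfolding H_def by (rule vec.subspace_inter[OF Z coord_eq_subspace])
  then obtain U where U: "vec.subspace U" "U \<subseteq> E \<inter> Y \<inter> H" "vec.dim U = vec.dim W"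
    using room by (rule vec.subspace_of_smaller_dim)
  have "polydiagonal (Y \<inter> H)"
    unfolding Y_def poly_hull_eq H_def polydiagonal_of_insert[symmetric] polydiagonal_def by blast
  hence hull_U: "poly_hull U \<subseteq> Y \<inter> H"
    using U(2) by (intro poly_hull_least) auto
  hence "poly_hull U = poly_hull W"
    using sp U unfolding special_def Y_def by blast
  hence "w \<in> H" using hull_U w(1) poly_hull_upper[of W] unfolding Y_def by auto
  thus False using w(2) unfolding H_def by simp
qed

text \<open>If all coordinate equalities hold on a nonzero subspace W, then W is the line of
  constant vectors, which is also P(W).\<close>
lemma poly_hull_subset_if_constant:
  assumes W: "vec.subspace W" "W \<noteq> {0}" and const: "equal_coords W = UNIV"
  shows "poly_hull W \<subseteq> W"
proof
  fix z assume z: "z \<in> poly_hull W"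
  obtain w where w: "w \<in> W" "w \<noteq> 0" using W vec.subspace_0 by blast
  obtain k where k: "w $ k \<noteq> 0" using w(2) by (metis vec_eq_iff zero_index)
  have all_pairs: "(a, b) \<in> equal_coords W" for a b
    using const by simp
  have w_const: "w $ i = w $ k" for i
    using all_pairs[of i k] w(1) unfolding equal_coords_def by blast
  have z_const: "z $ i = z $ k" for i
    using all_pairs[of i k] z unfolding poly_hull_eq polydiagonal_of_def by blast
  have "z = (z $ k / w $ k) *s w"
  proof (rule vec_eq_iff[THEN iffD2], intro allI)
    fix i
    have "((z $ k / w $ k) *s w) $ i = (z $ k / w $ k) * w $ k" using w_const[of i] by simp
    also have "\<dots> = z $ k" using k by simp
    finally show "z $ i = ((z $ k / w $ k) *s w) $ i" using z_const[of i] by simp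
  qed
  thus "z \<in> W" using w(1) W(1) by (metis vec.subspace_scale)
qed

lemma special_section_poly_hull:
  assumes E: "vec.subspace E" and W: "vec.subspace W" "W \<subseteq> E" "W \<noteq> {0}"
    and sp: "special E W"
  shows "E \<inter> poly_hull W = W"
proof (rule ccontr)
  assume "E \<inter> poly_hull W \<noteq> W"
  hence psub: "W \<subset> E \<inter> poly_hull W" using W(2) poly_hull_upper[of W] by auto
  show False
  proof (cases "equal_coords W = UNIV")
    case True
    thus False using poly_hull_subset_if_constant[OF W(1,3)] psub by blast
  next
    case False
    then obtain w i j where "w \<in> W" "w $ i \<noteq> w $ j"
      unfolding equal_coords_def by auto
    thus False using not_special_if_nonconstant[OF E W(1) psub] sp by blast
  qed
qed

section \<open>Sections with matching codimension\<close>

text \<open>Imposing an equality x_i = x_j that does not hold on E \<inter> P lowers the dimensions of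
  both P and E \<inter> P by one, so it preserves the equality of the two codimensions.\<close>
lemma codim_balance_coord_eq:
  fixes E P :: "('a::field ^ 'n) set"
  assumes E: "vec.subspace E" and P: "vec.subspace P"
    and balance: "CARD('n) - vec.dim P = vec.dim E - vec.dim (E \<inter> P)"
    and s: "s \<in> E \<inter> P" "s $ i \<noteq> s $ j"
  defines "H \<equiv> {x :: 'a ^ 'n. x $ i = x $ j}"
  shows "CARD('n) - vec.dim (P \<inter> H) = vec.dim E - vec.dim (E \<inter> P \<inter> H)"
proof -
  have EP: "vec.subspace (E \<inter> P)" by (rule vec.subspace_inter[OF E P])
  have "vec.dim (P \<inter> H) + 1 = vec.dim P"
    unfolding H_def using s by (intro dim_inter_coord_eq[OF P]) auto
  moreover have "vec.dim (E \<inter> P \<inter> H) + 1 = vec.dim (E \<inter> P)"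
    unfolding H_def using s by (intro dim_inter_coord_eq[OF EP]) auto
  moreover have "vec.dim P \<le> CARD('n)" by (rule dim_subset_UNIV_cart_gen)
  moreover have "vec.dim (E \<inter> P) \<le> vec.dim E" by (rule vec.dim_subset) auto
  ultimately show ?thesis using balance by linarith
qed

text \<open>Proof by imposing the equalities of X one at a
  time, keeping only those that cut down the current section.\<close>
lemma section_with_matching_codim:
  fixes E :: "(complex ^ 'n) set"
  assumes E: "vec.subspace E" and X: "polydiagonal X"
  obtains X' where "polydiagonal X'" "E \<inter> X' = E \<inter> X"
    "CARD('n) - vec.dim X' = vec.dim E - vec.dim (E \<inter> X')"
proof -
  have "\<exists>R'. E \<inter> polydiagonal_of R' = E \<inter> polydiagonal_of R \<and>
     CARD('n) - vec.dim (polydiagonal_of R') = vec.dim E - vec.dim (E \<inter> polydiagonal_of R')"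
    for R :: "('n \<times> 'n) set"
    using finite[of R]
  proof (induction R rule: finite_induct)
    case empty
    have univ: "polydiagonal_of ({} :: ('n \<times> 'n) set) = UNIV"
      by (simp add: polydiagonal_of_def)
    show ?case
      by (rule exI[of _ "{}"]) (simp only: univ Int_UNIV_right vec_dim_card diff_self_eq_0)
  next
    case (insert p R)
    obtain i j where p: "p = (i, j)" by fastforce
    obtain R' where R': "E \<inter> polydiagonal_of R' = E \<inter> polydiagonal_of R"
      "CARD('n) - vec.dim (polydiagonal_of R') = vec.dim E - vec.dim (E \<inter> polydiagonal_of R')"
      using insert.IH by blast
    define H where "H = {x :: complex ^ 'n. x $ i = x $ j}"
    have insert_R: "E \<inter> polydiagonal_of (insert p R) = E \<inter> polydiagonal_of R' \<inter> H"
      using R'(1) unfolding p polydiagonal_of_insert H_def by auto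
    show ?case
    proof (cases "E \<inter> polydiagonal_of R' \<subseteq> H")
      case True
      hence "E \<inter> polydiagonal_of (insert p R) = E \<inter> polydiagonal_of R'"
        using insert_R by blast
      thus ?thesis using R'(2) by blast
    next
      case False
      then obtain s where s: "s \<in> E \<inter> polydiagonal_of R'" "s $ i \<noteq> s $ j"
        by (auto simp: H_def)
      have insert_R': "polydiagonal_of (insert (i, j) R') = polydiagonal_of R' \<inter> H"
        unfolding H_def by (rule polydiagonal_of_insert)
      have "CARD('n) - vec.dim (polydiagonal_of (insert (i, j) R')) =
          vec.dim E - vec.dim (E \<inter> polydiagonal_of (insert (i, j) R'))"
        unfolding insert_R' Int_assoc[symmetric] H_def
        using codim_balance_coord_eq[OF E polydiagonal_of_subspace R'(2) s] .
      moreover have "E \<inter> polydiagonal_of (insert (i, j) R') = E \<inter> polydiagonal_of (insert p R)"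
        unfolding insert_R insert_R' by (simp add: Int_assoc)
      ultimately show ?thesis by metis
    qed
  qed
  with X that show thesis unfolding polydiagonal_def by blast
qed

theorem mainTheorem2:
  fixes E W :: "(complex ^ 'n) set"
  assumes "vec.subspace E"
    and "vec.dim E > 1"
    and "vec.subspace W"
    and "W \<subseteq> E"
    and "W \<noteq> {0}"
  shows "special E W \<longleftrightarrow>
    (\<exists>X. polydiagonal X \<and> CARD('n) - vec.dim X = vec.dim E - vec.dim W \<and> W = E \<inter> X)"
proof
  assume "special E W"
  hence hull_section: "E \<inter> poly_hull W = W"
    using special_section_poly_hull[OF assms(1,3,4,5)] by blast
  obtain X where "polydiagonal X" "E \<inter> X = E \<inter> poly_hull W"
    "CARD('n) - vec.dim X = vec.dim E - vec.dim (E \<inter> X)"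
    using section_with_matching_codim[OF assms(1) polydiagonal_poly_hull] .
  with hull_section show "\<exists>X. polydiagonal X \<and> CARD('n) - vec.dim X = vec.dim E - vec.dim W \<and> W = E \<inter> X"
    by metis
next
  assume "\<exists>X. polydiagonal X \<and> CARD('n) - vec.dim X = vec.dim E - vec.dim W \<and> W = E \<inter> X"
  thus "special E W" using special_if_section assms(3) by blast
qed

end
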